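(* Let $\Phi$ be an automorphism of $(Ass\text{-}\mathbf K)^0$ that fixes every object. Then for every object $A$, the main function satisfies $s_A(f_A(\mathbf K))=f_A(\mathbf K)$; that is, $s_A$ restricts to a permutation of the set $f_A(\mathbf K)$ of scalars of $A$.
   Context: $\mathbf K$ is an infinite field. A $\mathbf K$-algebra is an associative ring $A$ with unit together with a unital ring homomorphism $f_A:\mathbf K\to Z(A)$ into the center of $A$. Homomorphisms are unital ring homomorphisms $\nu:A\to B$ with $\nu\circ f_A=f_B$. $(Ass\text{-}\mathbf K)^0$ is the category of free associative $\mathbf K$-algebras (noncommutative polynomial algebras $\mathbf K\langle X\rangle$) on finite subsets $X$ of a fixed infinite set $X_0$, with all $\mathbf K$-algebra homomorphisms. $F_1$ denotes the free algebra on a single $x_0\in X_0$. For an object $A$ and $a\in A$, $\alpha_a:F_1\to A$ is the homomorphism with $x_0\mapsto a$. For an automorphism $\Phi$ fixing $F_1$, the main function is $s_A(a)=\Phi(\alpha_a)(x_0)$, so $\Phi(\mu)=s_B\circ\mu\circ s_A^{-1}$. *)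

theory Defs
  imports "HOL-Library.FuncSet"
begin

text \<open>Elements of the free associative algebra K<X> are finitely supported
  coefficient functions on words (lists) over X.\<close>

type_synonym ('x,'k) fa = "'x list \<Rightarrow> 'k"

definition FA :: "'x set \<Rightarrow> ('x,'k::field) fa set" where
  "FA X = {p. finite {w. p w \<noteq> 0} \<and> (\<forall>w. p w \<noteq> 0 \<longrightarrow> set w \<subseteq> X)}"

definition fa_add :: "('x,'k::field) fa \<Rightarrow> ('x,'k) fa \<Rightarrow> ('x,'k) fa" where
  "fa_add p q = (\<lambda>w. p w + q w)"

definition fa_mult :: "('x,'k::field) fa \<Rightarrow> ('x,'k) fa \<Rightarrow> ('x,'k) fa" where
  "fa_mult p q = (\<lambda>w. \<Sum>i\<le>length w. p (take i w) * q (drop i w))"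

definition fa_scalar :: "'k::field \<Rightarrow> ('x,'k) fa" where
  "fa_scalar c = (\<lambda>w. if w = [] then c else 0)"

definition fa_one :: "('x,'k::field) fa" where
  "fa_one = fa_scalar 1"

definition fa_var :: "'x \<Rightarrow> ('x,'k::field) fa" where
  "fa_var x = (\<lambda>w. if w = [x] then 1 else 0)"

definition fa_pow :: "('x,'k::field) fa \<Rightarrow> nat \<Rightarrow> ('x,'k) fa" where
  "fa_pow a n = ((fa_mult a) ^^ n) fa_one"

definition scalars :: "'x set \<Rightarrow> ('x,'k::field) fa set" where
  "scalars A = range fa_scalar"

definition fa_hom :: "'x set \<Rightarrow> 'x set \<Rightarrow> (('x,'k::field) fa \<Rightarrow> ('x,'k) fa) set" where
  "fa_hom X Y = {h. h \<in> extensional (FA X) \<and> h \<in> FA X \<rightarrow> FA Y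
     \<and> (\<forall>p\<in>FA X. \<forall>q\<in>FA X. h (fa_add p q) = fa_add (h p) (h q))
     \<and> (\<forall>p\<in>FA X. \<forall>q\<in>FA X. h (fa_mult p q) = fa_mult (h p) (h q))
     \<and> h fa_one = fa_one
     \<and> (\<forall>c. h (fa_scalar c) = fa_scalar c)}"

definition fa_id :: "'x set \<Rightarrow> ('x,'k::field) fa \<Rightarrow> ('x,'k) fa" where
  "fa_id X = restrict id (FA X)"

definition fa_comp :: "'x set \<Rightarrow> (('x,'k::field) fa \<Rightarrow> ('x,'k) fa) \<Rightarrow> (('x,'k) fa \<Rightarrow> ('x,'k) fa)
    \<Rightarrow> ('x,'k) fa \<Rightarrow> ('x,'k) fa" where
  "fa_comp X g f = compose (FA X) g f"

text \<open>Objects of (Ass-K)^0: finite subsets of the infinite set X_0 (= UNIV of type 'x).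
  An automorphism fixing every object is a family of bijections on hom-sets that is functorial.\<close>
definition obj_fixing_auto ::
  "('x set \<Rightarrow> 'x set \<Rightarrow> (('x,'k::field) fa \<Rightarrow> ('x,'k) fa) \<Rightarrow> (('x,'k) fa \<Rightarrow> ('x,'k) fa)) \<Rightarrow> bool" where
  "obj_fixing_auto \<Phi> \<longleftrightarrow>
     (\<forall>X Y. finite X \<longrightarrow> finite Y \<longrightarrow> bij_betw (\<Phi> X Y) (fa_hom X Y) (fa_hom X Y))
   \<and> (\<forall>X. finite X \<longrightarrow> \<Phi> X X (fa_id X) = fa_id X)
   \<and> (\<forall>X Y Z f g. finite X \<longrightarrow> finite Y \<longrightarrow> finite Z \<longrightarrow> f \<in> fa_hom X Y \<longrightarrow> g \<in> fa_hom Y Z \<longrightarrow>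
        \<Phi> X Z (fa_comp X g f) = fa_comp X (\<Phi> Y Z g) (\<Phi> X Y f))"

text \<open>alpha_a : F_1 = K<x0> -> A, x0 |-> a (substitution homomorphism).\<close>
definition alpha :: "'x \<Rightarrow> ('x,'k::field) fa \<Rightarrow> ('x,'k) fa \<Rightarrow> ('x,'k) fa" where
  "alpha x0 a = restrict (\<lambda>p. (\<lambda>w. \<Sum>u\<in>{u. p u \<noteq> 0}. p u * fa_pow a (length u) w)) (FA {x0})"

definition main_fun :: "('x set \<Rightarrow> 'x set \<Rightarrow> (('x,'k::field) fa \<Rightarrow> ('x,'k) fa) \<Rightarrow> (('x,'k) fa \<Rightarrow> ('x,'k) fa))
    \<Rightarrow> 'x \<Rightarrow> 'x set \<Rightarrow> ('x,'k) fa \<Rightarrow> ('x,'k) fa" where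
  "main_fun \<Phi> x0 A a = \<Phi> {x0} A (alpha x0 a) (fa_var x0)"

end

theory Submission imports Defs begin

text \<open>
  A homomorphism from \<open>F\<^sub>1 = K\<langle>x\<^sub>0\<rangle>\<close> to the ground field \<open>K = K\<langle>\<emptyset>\<rangle>\<close> is determined by the
  scalar it assigns to \<open>x\<^sub>0\<close>, so these homomorphisms are exactly the evaluations
  \<open>\<alpha>\<^sub>c\<close>, \<open>c \<in> K\<close>, and \<open>\<Phi>\<close> permutes them. For a scalar \<open>c\<close> of \<open>A\<close>, \<open>\<alpha>\<^sub>c : F\<^sub>1 \<rightarrow> A\<close>
  factors through \<open>K\<close>; by functoriality \<open>s\<^sub>A(c) = \<Phi>(\<iota>)(\<Phi>(\<alpha>\<^sub>c)(x\<^sub>0))\<close> with \<open>\<iota> : K \<rightarrow> A\<close>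
  the inclusion, and \<open>\<Phi>(\<iota>)\<close> fixes the scalar \<open>\<Phi>(\<alpha>\<^sub>c)(x\<^sub>0)\<close>. Hence \<open>s\<^sub>A\<close> on scalars is
  \<open>\<Phi>\<close> acting on \<open>{\<alpha>\<^sub>c}\<close> read off at \<open>x\<^sub>0\<close>, a bijection.
\<close>

lemma fa_scalar_in_FA: "fa_scalar c \<in> FA X"
  unfolding FA_def fa_scalar_def by (auto intro: finite_subset[of _ "{[]}"])

lemma fa_var_in_FA: "x \<in> X \<Longrightarrow> fa_var x \<in> FA X"
  unfolding FA_def fa_var_def by (auto intro: finite_subset[of _ "{[x]}"])

lemma FA_mono: "X \<subseteq> Y \<Longrightarrow> FA X \<subseteq> FA Y"
  unfolding FA_def by blast

lemma finite_support_FA: "p \<in> FA X \<Longrightarrow> finite {w. p w \<noteq> 0}"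
  unfolding FA_def by blast

lemma FA_empty: "FA {} = range fa_scalar"
proof
  show "FA {} \<subseteq> range fa_scalar"
  proof
    fix p :: "('x,'k::field) fa" assume "p \<in> FA {}"
    then have "p = fa_scalar (p [])" unfolding FA_def fa_scalar_def by (intro ext) auto
    then show "p \<in> range fa_scalar" by blast
  qed
qed (auto intro: fa_scalar_in_FA)

lemma fa_add_in_FA:
  assumes "p \<in> FA X" "q \<in> FA X"
  shows "fa_add p q \<in> FA X"
proof -
  have "{w. fa_add p q w \<noteq> 0} \<subseteq> {w. p w \<noteq> 0} \<union> {w. q w \<noteq> 0}"
    by (auto simp: fa_add_def)
  with assms show ?thesis unfolding FA_def fa_add_def by (auto intro: finite_subset)
qed

lemma fa_mult_eq_sum_factorizations:
  "fa_mult p q w =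
     (\<Sum>(u, v) \<in> {(u, v) \<in> {u. p u \<noteq> 0} \<times> {v. q v \<noteq> 0}. u @ v = w}. p u * q v)"
  (is "_ = ?rhs")
proof -
  have "fa_mult p q w =
      (\<Sum>i \<in> {i. i \<le> length w \<and> p (take i w) \<noteq> 0 \<and> q (drop i w) \<noteq> 0}. p (take i w) * q (drop i w))"
    unfolding fa_mult_def by (rule sum.mono_neutral_right) auto
  also have "\<dots> = ?rhs"
    by (rule sum.reindex_bij_witness[where i = "\<lambda>(u, v). length u" and j = "\<lambda>i. (take i w, drop i w)"]) auto
  finally show ?thesis .
qed

lemma fa_mult_nonzero_factorization:
  assumes "fa_mult p q w \<noteq> 0"
  obtains u v where "p u \<noteq> 0" "q v \<noteq> 0" "w = u @ v"
proof -
  have "{(u, v) \<in> {u. p u \<noteq> 0} \<times> {v. q v \<noteq> 0}. u @ v = w} \<noteq> {}"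
    using assms unfolding fa_mult_eq_sum_factorizations by (metis sum.empty)
  then show ?thesis using that by blast
qed

lemma fa_mult_in_FA:
  assumes p: "p \<in> FA X" and q: "q \<in> FA X"
  shows "fa_mult p q \<in> FA X"
proof -
  have "{w. fa_mult p q w \<noteq> 0} \<subseteq> (\<lambda>(u, v). u @ v) ` ({u. p u \<noteq> 0} \<times> {v. q v \<noteq> 0})"
    by (auto elim: fa_mult_nonzero_factorization)
  moreover have "finite ({u. p u \<noteq> 0} \<times> {v. q v \<noteq> 0})"
    using p q by (simp add: finite_support_FA)
  moreover have "set w \<subseteq> X" if nonzero: "fa_mult p q w \<noteq> 0" for w
  proof -
    obtain u v where "p u \<noteq> 0" "q v \<noteq> 0" "w = u @ v"
      using nonzero by (rule fa_mult_nonzero_factorization)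
    with p q show ?thesis unfolding FA_def by auto
  qed
  ultimately show ?thesis unfolding FA_def by (auto intro: finite_subset)
qed

lemma fa_mult_scalar_left: "fa_mult (fa_scalar c) q = (\<lambda>w. c * q w)"
proof
  fix w
  have "fa_mult (fa_scalar c) q w = (\<Sum>i\<le>length w. if i = 0 then c * q w else 0)"
    unfolding fa_mult_def by (rule sum.cong) (auto simp: fa_scalar_def)
  then show "fa_mult (fa_scalar c) q w = c * q w" by simp
qed

lemma fa_mult_scalar_scalar: "fa_mult (fa_scalar c) (fa_scalar d) = fa_scalar (c * d)"
  unfolding fa_mult_scalar_left by (auto simp: fa_scalar_def)

lemma fa_add_scalar_scalar: "fa_add (fa_scalar c) (fa_scalar d) = fa_scalar (c + d)"
  by (auto simp: fa_add_def fa_scalar_def)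

lemma fa_pow_scalar: "fa_pow (fa_scalar c) n = fa_scalar (c ^ n)"
  by (induction n) (simp_all add: fa_pow_def fa_one_def fa_mult_scalar_scalar)

lemma fa_mult_var_Nil: "fa_mult (fa_var x) q [] = (0::'k::field)"
  unfolding fa_mult_def by (simp add: fa_var_def)

lemma fa_mult_var_Cons: "fa_mult (fa_var x) q (y # v) = (if y = x then q v else (0::'k::field))"
proof -
  have "fa_mult (fa_var x) q (y # v) = (\<Sum>i\<le>Suc (length v). fa_var x (take i (y # v)) * q (drop i (y # v)))"
    unfolding fa_mult_def by simp
  also have "\<dots> = (\<Sum>i\<le>length v. fa_var x (y # take i v) * q (drop i v))"
    unfolding sum.atMost_Suc_shift by (simp add: fa_var_def)
  also have "\<dots> = (\<Sum>i\<le>length v. if i = 0 then fa_var x [y] * q v else 0)"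
    by (rule sum.cong) (auto simp: fa_var_def)
  finally show ?thesis by (simp add: fa_var_def)
qed

definition fa_word :: "'x list \<Rightarrow> ('x,'k::field) fa" where
  "fa_word u = (\<lambda>w. if w = u then 1 else 0)"

lemma fa_word_in_FA: "set u \<subseteq> X \<Longrightarrow> fa_word u \<in> FA X"
  unfolding FA_def fa_word_def by (auto intro: finite_subset[of _ "{u}"])

lemma fa_word_Nil: "fa_word [] = fa_one"
  unfolding fa_word_def fa_one_def fa_scalar_def ..

lemma fa_word_Cons: "fa_word (x # u) = (fa_mult (fa_var x) (fa_word u) :: ('x,'k::field) fa)"
proof
  fix w show "fa_word (x # u) w = fa_mult (fa_var x) (fa_word u) w"
    by (cases w) (simp_all add: fa_mult_var_Nil fa_mult_var_Cons fa_word_def)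
qed

lemma FA_induct[consumes 1, case_names zero add_monomial]:
  fixes p :: "('x,'k::field) fa"
  assumes "p \<in> FA X"
    and zero: "P (fa_scalar 0)"
    and add_monomial: "\<And>p c u. p \<in> FA X \<Longrightarrow> set u \<subseteq> X \<Longrightarrow> P p \<Longrightarrow>
      P (fa_add p (fa_mult (fa_scalar c) (fa_word u)))"
  shows "P p"
proof -
  have "\<forall>p \<in> FA X. {w. p w \<noteq> 0} = F \<longrightarrow> P p" if "finite F" for F
    using that
  proof (induction F rule: finite_induct)
    case empty
    have "p = fa_scalar 0" if "{w. p w \<noteq> 0} = {}" for p :: "('x,'k) fa"
      using that by (auto simp: fa_scalar_def)
    then show ?case using zero by blast
  next
    case (insert u F)
    show ?case
    proof (intro ballI impI)
      fix p :: "('x,'k) fa" assume p: "p \<in> FA X" and support: "{w. p w \<noteq> 0} = insert u F"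
      let ?p' = "p(u := 0)"
      have "set u \<subseteq> X" using p support unfolding FA_def by auto
      moreover have support': "{w. ?p' w \<noteq> 0} = F"
        using support insert.hyps by auto
      moreover have "?p' \<in> FA X"
        using p support' insert.hyps unfolding FA_def by auto
      moreover have "p = fa_add ?p' (fa_mult (fa_scalar (p u)) (fa_word u))"
        by (auto simp: fa_add_def fa_mult_scalar_left fa_word_def)
      ultimately show "P p" using insert.IH add_monomial by metis
    qed
  qed
  with assms(1) show ?thesis by (auto dest: finite_support_FA)
qed

definition fa_eval :: "'k::field \<Rightarrow> ('x,'k) fa \<Rightarrow> 'k" where
  "fa_eval c p = (\<Sum>u | p u \<noteq> 0. p u * c ^ length u)"

lemma fa_eval_superset:
  "finite S \<Longrightarrow> {u. p u \<noteq> 0} \<subseteq> S \<Longrightarrow> fa_eval c p = (\<Sum>u\<in>S. p u * c ^ length u)"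
  unfolding fa_eval_def by (rule sum.mono_neutral_left) auto

lemma fa_eval_scalar: "fa_eval c (fa_scalar d) = d"
  by (subst fa_eval_superset[of "{[]}"]) (auto simp: fa_scalar_def)

lemma fa_eval_var: "fa_eval c (fa_var x) = c"
  by (subst fa_eval_superset[of "{[x]}"]) (auto simp: fa_var_def)

lemma fa_eval_add:
  assumes "finite {u. p u \<noteq> 0}" "finite {u. q u \<noteq> 0}"
  shows "fa_eval c (fa_add p q) = fa_eval c p + fa_eval c q"
proof -
  let ?S = "{u. p u \<noteq> 0} \<union> {u. q u \<noteq> 0}"
  have fin: "finite ?S" using assms by simp
  have "fa_eval c (fa_add p q) = (\<Sum>u\<in>?S. fa_add p q u * c ^ length u)"
    using fin by (rule fa_eval_superset) (auto simp: fa_add_def)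
  also have "\<dots> = (\<Sum>u\<in>?S. p u * c ^ length u) + (\<Sum>u\<in>?S. q u * c ^ length u)"
    by (simp add: fa_add_def sum.distrib distrib_right)
  also have "\<dots> = fa_eval c p + fa_eval c q"
    using fa_eval_superset[OF fin, of p c] fa_eval_superset[OF fin, of q c] by simp
  finally show ?thesis .
qed

lemma fa_eval_mult:
  assumes "finite {u. p u \<noteq> 0}" "finite {u. q u \<noteq> 0}"
  shows "fa_eval c (fa_mult p q) = fa_eval c p * fa_eval c q"
proof -
  let ?PQ = "{u. p u \<noteq> 0} \<times> {v. q v \<noteq> 0}"
  let ?T = "(\<lambda>(u, v). u @ v) ` ?PQ"
  let ?h = "\<lambda>(u, v). p u * c ^ length u * (q v * c ^ length v)"
  have fin: "finite ?PQ" "finite ?T" using assms by auto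
  have "fa_eval c (fa_mult p q) = (\<Sum>w\<in>?T. fa_mult p q w * c ^ length w)"
    using fin by (intro fa_eval_superset) (auto elim: fa_mult_nonzero_factorization)
  also have "\<dots> = (\<Sum>w\<in>?T. \<Sum>x \<in> {x \<in> ?PQ. (\<lambda>(u, v). u @ v) x = w}. ?h x)"
    unfolding fa_mult_eq_sum_factorizations sum_distrib_right
    by (intro sum.cong refl) (auto simp: power_add mult_ac)
  also have "\<dots> = (\<Sum>x\<in>?PQ. ?h x)"
    using fin by (intro sum.group) auto
  also have "\<dots> = fa_eval c p * fa_eval c q"
    unfolding fa_eval_def sum_product sum.cartesian_product by (simp add: case_prod_beta)
  finally show ?thesis .
qed

lemma fa_hom_extensional: "h \<in> fa_hom X Y \<Longrightarrow> h \<in> extensional (FA X)"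
  unfolding fa_hom_def by blast

lemma fa_hom_in_FA: "h \<in> fa_hom X Y \<Longrightarrow> p \<in> FA X \<Longrightarrow> h p \<in> FA Y"
  unfolding fa_hom_def by blast

lemma fa_hom_scalar: "h \<in> fa_hom X Y \<Longrightarrow> h (fa_scalar c) = fa_scalar c"
  unfolding fa_hom_def by blast

lemma fa_hom_add:
  "h \<in> fa_hom X Y \<Longrightarrow> p \<in> FA X \<Longrightarrow> q \<in> FA X \<Longrightarrow> h (fa_add p q) = fa_add (h p) (h q)"
  unfolding fa_hom_def by blast

lemma fa_hom_mult:
  "h \<in> fa_hom X Y \<Longrightarrow> p \<in> FA X \<Longrightarrow> q \<in> FA X \<Longrightarrow> h (fa_mult p q) = fa_mult (h p) (h q)"
  unfolding fa_hom_def by blast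

lemma fa_hom_word:
  assumes "h \<in> fa_hom X Y" "set u \<subseteq> X"
  shows "h (fa_word u) = foldr (\<lambda>x. fa_mult (h (fa_var x))) u fa_one"
  using assms(2)
proof (induction u)
  case Nil
  show ?case using fa_hom_scalar[OF assms(1)] by (simp add: fa_word_Nil fa_one_def)
next
  case (Cons x u)
  then show ?case
    by (simp add: fa_word_Cons fa_hom_mult[OF assms(1)] fa_var_in_FA fa_word_in_FA)
qed

lemma fa_hom_eqI:
  fixes h g :: "('x,'k::field) fa \<Rightarrow> ('x,'k) fa"
  assumes h: "h \<in> fa_hom X Y" and g: "g \<in> fa_hom X Y"
    and vars: "\<And>x. x \<in> X \<Longrightarrow> h (fa_var x) = g (fa_var x)"
  shows "h = g"
proof (rule extensionalityI)
  show "h \<in> extensional (FA X)" "g \<in> extensional (FA X)"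
    using h g by (simp_all add: fa_hom_extensional)
  fix p :: "('x,'k) fa" assume "p \<in> FA X"
  then show "h p = g p"
  proof (induction rule: FA_induct)
    case zero
    show ?case by (simp add: fa_hom_scalar[OF h] fa_hom_scalar[OF g])
  next
    case (add_monomial p c u)
    have "h (fa_word u) = g (fa_word u)"
      using add_monomial.hyps(2) vars
      by (simp add: fa_hom_word[OF h] fa_hom_word[OF g] subset_iff cong: foldr_cong)
    with add_monomial show ?case
      by (simp add: fa_hom_add[OF h] fa_hom_add[OF g] fa_hom_mult[OF h] fa_hom_mult[OF g]
          fa_hom_scalar[OF h] fa_hom_scalar[OF g] fa_scalar_in_FA fa_word_in_FA fa_mult_in_FA)
  qed
qed

lemma fa_id_hom:
  assumes "X \<subseteq> Y"
  shows "fa_id X \<in> fa_hom X Y"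
  unfolding fa_hom_def fa_id_def fa_one_def
proof (intro CollectI conjI ballI allI)
  show "restrict id (FA X) \<in> FA X \<rightarrow> FA Y"
    using FA_mono[OF assms] by auto
qed (simp_all add: fa_scalar_in_FA fa_add_in_FA fa_mult_in_FA)

lemma fa_comp_fa_id_left:
  assumes "f \<in> fa_hom X Y"
  shows "fa_comp X (fa_id Y) f = f"
proof
  fix p show "fa_comp X (fa_id Y) f p = f p"
  proof (cases "p \<in> FA X")
    case True
    then show ?thesis by (simp add: fa_comp_def fa_id_def compose_def fa_hom_in_FA[OF assms])
  next
    case False
    then show ?thesis
      by (simp add: fa_comp_def compose_def extensional_arb[OF fa_hom_extensional[OF assms]])
  qed
qed

lemma alpha_scalar:
  "p \<in> FA {x0} \<Longrightarrow> alpha x0 (fa_scalar c) p = fa_scalar (fa_eval c p)"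
  unfolding alpha_def fa_pow_scalar fa_eval_def by (auto simp: fa_scalar_def)

lemma alpha_scalar_var: "alpha x0 (fa_scalar c) (fa_var x0) = fa_scalar c"
  by (simp add: alpha_scalar fa_var_in_FA fa_eval_var)

lemma alpha_scalar_hom:
  fixes x0 :: 'x and c :: "'k::field"
  shows "alpha x0 (fa_scalar c) \<in> fa_hom {x0} Y"
  unfolding fa_hom_def
proof (intro CollectI conjI ballI allI)
  show "alpha x0 (fa_scalar c) \<in> extensional (FA {x0})"
    unfolding alpha_def by simp
  show "alpha x0 (fa_scalar c) \<in> FA {x0} \<rightarrow> FA Y"
    by (simp add: alpha_scalar fa_scalar_in_FA)
  show "alpha x0 (fa_scalar c) fa_one = fa_one"
    unfolding fa_one_def by (simp add: alpha_scalar fa_scalar_in_FA fa_eval_scalar)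
  fix d show "alpha x0 (fa_scalar c) (fa_scalar d) = fa_scalar d"
    by (simp add: alpha_scalar fa_scalar_in_FA fa_eval_scalar)
next
  fix p q :: "('x,'k) fa" assume p: "p \<in> FA {x0}" and q: "q \<in> FA {x0}"
  show "alpha x0 (fa_scalar c) (fa_add p q) = fa_add (alpha x0 (fa_scalar c) p) (alpha x0 (fa_scalar c) q)"
    using p q by (simp add: alpha_scalar fa_add_in_FA fa_eval_add finite_support_FA fa_add_scalar_scalar)
  show "alpha x0 (fa_scalar c) (fa_mult p q) = fa_mult (alpha x0 (fa_scalar c) p) (alpha x0 (fa_scalar c) q)"
    using p q by (simp add: alpha_scalar fa_mult_in_FA fa_eval_mult finite_support_FA fa_mult_scalar_scalar)
qed

lemma fa_hom_to_ground_field: "fa_hom {x0} {} = range (\<lambda>c::'k::field. alpha x0 (fa_scalar c))"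
proof
  show "range (\<lambda>c. alpha x0 (fa_scalar c)) \<subseteq> fa_hom {x0} {}"
    by (auto intro: alpha_scalar_hom)
  show "fa_hom {x0} {} \<subseteq> range (\<lambda>c. alpha x0 (fa_scalar c))"
  proof
    fix h assume h: "h \<in> fa_hom {x0} {}"
    obtain c where c: "h (fa_var x0) = fa_scalar c"
      using fa_hom_in_FA[OF h fa_var_in_FA] FA_empty by blast
    have "h = alpha x0 (fa_scalar c)"
      using h alpha_scalar_hom by (rule fa_hom_eqI) (simp add: c alpha_scalar_var)
    then show "h \<in> range (\<lambda>c. alpha x0 (fa_scalar c))" by blast
  qed
qed

lemma obj_fixing_auto_bij:
  assumes "obj_fixing_auto \<Phi>" "finite X" "finite Y"
  shows "bij_betw (\<Phi> X Y) (fa_hom X Y) (fa_hom X Y)"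
proof -
  have "\<forall>X Y. finite X \<longrightarrow> finite Y \<longrightarrow> bij_betw (\<Phi> X Y) (fa_hom X Y) (fa_hom X Y)"
    using assms(1) unfolding obj_fixing_auto_def by (rule conjunct1)
  from this[rule_format, OF assms(2,3)] show ?thesis .
qed

lemma obj_fixing_auto_hom:
  assumes "obj_fixing_auto \<Phi>" "finite X" "finite Y" "f \<in> fa_hom X Y"
  shows "\<Phi> X Y f \<in> fa_hom X Y"
  using bij_betwE[OF obj_fixing_auto_bij[OF assms(1-3)]] assms(4) by blast

lemma obj_fixing_auto_comp:
  assumes "obj_fixing_auto \<Phi>" "finite X" "finite Y" "finite Z" "f \<in> fa_hom X Y" "g \<in> fa_hom Y Z"
  shows "\<Phi> X Z (fa_comp X g f) = fa_comp X (\<Phi> Y Z g) (\<Phi> X Y f)"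
proof -
  have "\<forall>X Y Z f g. finite X \<longrightarrow> finite Y \<longrightarrow> finite Z \<longrightarrow> f \<in> fa_hom X Y \<longrightarrow> g \<in> fa_hom Y Z \<longrightarrow>
      \<Phi> X Z (fa_comp X g f) = fa_comp X (\<Phi> Y Z g) (\<Phi> X Y f)"
    using assms(1) unfolding obj_fixing_auto_def by (rule conjunct2[THEN conjunct2])
  from this[rule_format, OF assms(2-6)] show ?thesis .
qed

lemma main_fun_scalar:
  assumes \<Phi>: "obj_fixing_auto \<Phi>" and "finite A"
  shows "main_fun \<Phi> x0 A (fa_scalar c) = \<Phi> {x0} {} (alpha x0 (fa_scalar c)) (fa_var x0)"
proof -
  let ?\<alpha> = "alpha x0 (fa_scalar c)"
  have \<alpha>: "?\<alpha> \<in> fa_hom {x0} {}" by (rule alpha_scalar_hom)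
  have \<iota>: "fa_id {} \<in> fa_hom {} A" by (rule fa_id_hom) simp
  have "\<Phi> {x0} {} ?\<alpha> \<in> fa_hom {x0} {}"
    using obj_fixing_auto_hom[OF \<Phi> _ _ \<alpha>] by simp
  from fa_hom_in_FA[OF this fa_var_in_FA] obtain e where e: "\<Phi> {x0} {} ?\<alpha> (fa_var x0) = fa_scalar e"
    unfolding FA_empty by auto
  have "\<Phi> {} A (fa_id {}) \<in> fa_hom {} A"
    using obj_fixing_auto_hom[OF \<Phi> _ \<open>finite A\<close> \<iota>] by simp
  then have "\<Phi> {} A (fa_id {}) (fa_scalar e) = fa_scalar e"
    by (rule fa_hom_scalar)
  moreover have "main_fun \<Phi> x0 A (fa_scalar c) = \<Phi> {x0} A (fa_comp {x0} (fa_id {}) ?\<alpha>) (fa_var x0)"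
    unfolding main_fun_def fa_comp_fa_id_left[OF \<alpha>] ..
  moreover have "\<dots> = \<Phi> {} A (fa_id {}) (\<Phi> {x0} {} ?\<alpha> (fa_var x0))"
    using obj_fixing_auto_comp[OF \<Phi> _ _ \<open>finite A\<close> \<alpha> \<iota>]
    by (simp add: fa_comp_def compose_def fa_var_in_FA)
  ultimately show ?thesis using e by simp
qed

theorem mainTheorem7:
  fixes \<Phi> :: "'x set \<Rightarrow> 'x set \<Rightarrow> (('x,'k::field) fa \<Rightarrow> ('x,'k) fa) \<Rightarrow> (('x,'k) fa \<Rightarrow> ('x,'k) fa)"
    and x0 :: 'x and A :: "'x set"
  assumes "infinite (UNIV :: 'k set)"
    and "infinite (UNIV :: 'x set)"
    and "obj_fixing_auto \<Phi>"
    and "finite A"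
  shows "main_fun \<Phi> x0 A ` scalars A = scalars A"
proof -
  have "main_fun \<Phi> x0 A ` scalars A = (\<lambda>h. h (fa_var x0)) ` \<Phi> {x0} {} ` fa_hom {x0} {}"
    unfolding scalars_def fa_hom_to_ground_field image_image
    by (simp add: main_fun_scalar[OF assms(3,4)])
  also have "\<Phi> {x0} {} ` fa_hom {x0} {} = fa_hom {x0} {}"
    using obj_fixing_auto_bij[OF assms(3)] by (simp add: bij_betw_imp_surj_on)
  also have "(\<lambda>h. h (fa_var x0)) ` fa_hom {x0} {} = scalars A"
    unfolding scalars_def fa_hom_to_ground_field image_image by (simp add: alpha_scalar_var)
  finally show ?thesis .
qed

end
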